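(* Let $\Omega\subset\mathbb{C}^2$ be a domain, let $h$ be a holomorphic function on $\Omega$, let $\rho(z):=|h(z)|^2-1$ with $d\rho\neq 0$ on $M:=\{z\in\Omega:\rho(z)=0\}$, and let $K$ be a $C^2$-smooth totally real disc contained in $M$. Then $h$ is constant along each leaf of the characteristic foliation of $K$.
   Context: A $C^2$-smooth totally real disc is a compact subset of a $C^2$-smooth submanifold $N$ of $\mathbb{C}^2$ with $T_pN\cap iT_pN=\{0\}$ for all $p\in N$, which is $C^2$-diffeomorphic to the closed unit disc in the plane. For $p\in M$, $T^{\mathbb{C}}_pM:=T_pM\cap iT_pM$. The characteristic foliation of $K$ is the foliation whose leaves are the curves $\gamma$ in $K$ with $\gamma'(t)\in T_{\gamma(t)}K\cap T^{\mathbb{C}}_{\gamma(t)}M$ for all $t$. *)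

theory Defs
  imports "HOL-Analysis.Analysis"
begin

text \<open>We model \<open>\<complex>\<^sup>2\<close> as \<open>complex \<times> complex\<close> and the parameter plane \<open>\<real>\<^sup>2\<close>
  as \<open>real \<times> real\<close> (Euclidean norm, so \<open>cball 0 1\<close> is the closed unit disc).\<close>

definition cmul :: "complex \<Rightarrow> complex \<times> complex \<Rightarrow> complex \<times> complex" where
  "cmul c w = (c * fst w, c * snd w)"

definition holomorphic2_on :: "(complex \<times> complex \<Rightarrow> complex) \<Rightarrow> (complex \<times> complex) set \<Rightarrow> bool" where
  "holomorphic2_on h \<Omega> \<longleftrightarrow>
     (\<forall>z\<in>\<Omega>. \<exists>a b. (h has_derivative (\<lambda>w. a * fst w + b * snd w)) (at z))"

definition C2_on :: "('a::real_normed_vector) set \<Rightarrow> ('a \<Rightarrow> 'b::real_normed_vector) \<Rightarrow> bool" where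
  "C2_on U f \<longleftrightarrow> (\<exists>D1 D2. (\<forall>x\<in>U.
      (f has_derivative blinfun_apply (D1 x)) (at x) \<and>
      (D1 has_derivative blinfun_apply (D2 x)) (at x)) \<and> continuous_on U D2)"

text \<open>\<open>K\<close> is a \<open>C\<^sup>2\<close>-smooth totally real disc, presented by a \<open>C\<^sup>2\<close> injective immersion
  \<open>\<phi>\<close> of an open neighbourhood \<open>U\<close> of the closed unit disc (its image near the disc
  is the ambient surface \<open>N\<close>), with \<open>K = \<phi>(closed disc)\<close> and \<open>T\<^sub>pN \<inter> i T\<^sub>pN = {0}\<close>.\<close>
definition tangent_plane :: "(real \<times> real \<Rightarrow> complex \<times> complex) \<Rightarrow> real \<times> real \<Rightarrow> (complex \<times> complex) set" where
  "tangent_plane \<phi> x = range (frechet_derivative \<phi> (at x))"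

definition totally_real_disc_chart ::
  "(real \<times> real) set \<Rightarrow> (real \<times> real \<Rightarrow> complex \<times> complex) \<Rightarrow> (complex \<times> complex) set \<Rightarrow> bool" where
  "totally_real_disc_chart U \<phi> K \<longleftrightarrow>
     open U \<and> cball 0 1 \<subseteq> U \<and> C2_on U \<phi> \<and> inj_on \<phi> U \<and>
     (\<forall>x\<in>U. \<phi> differentiable (at x) \<and> inj (frechet_derivative \<phi> (at x)) \<and>
        (\<forall>v\<in>tangent_plane \<phi> x. cmul \<i> v \<in> tangent_plane \<phi> x \<longrightarrow> v = 0)) \<and>
     K = \<phi> ` cball 0 1"

definition tangent_K ::
  "(real \<times> real) set \<Rightarrow> (real \<times> real \<Rightarrow> complex \<times> complex) \<Rightarrow> complex \<times> complex \<Rightarrow> (complex \<times> complex) set" where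
  "tangent_K U \<phi> p = tangent_plane \<phi> (inv_into U \<phi> p)"

definition complex_tangent :: "(complex \<times> complex \<Rightarrow> real) \<Rightarrow> complex \<times> complex \<Rightarrow> (complex \<times> complex) set" where
  "complex_tangent \<rho> p = {v. frechet_derivative \<rho> (at p) v = 0 \<and>
                              (\<exists>w. frechet_derivative \<rho> (at p) w = 0 \<and> v = cmul \<i> w)}"

end

theory Submission
  imports Defs
begin

text \<open>Along \<open>M\<close> we have \<open>h \<noteq> 0\<close> and \<open>d\<rho>(p) v = 2 Re (conj (h p) \<cdot> dh(p) v)\<close>. A complex tangent
  vector \<open>v = i w\<close> has both \<open>v\<close> and \<open>w\<close> in \<open>ker d\<rho>(p)\<close>; since \<open>dh(p)\<close> is complex linear, the
  complex number \<open>conj (h p) \<cdot> dh(p) w\<close> then has vanishing real and imaginary part, so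
  \<open>dh(p) v = i dh(p) w = 0\<close>. Hence \<open>h \<circ> \<gamma>\<close> has zero derivative along every leaf \<open>\<gamma>\<close>.\<close>

lemma orthogonal_complex_line_imp_zero:
  fixes c z :: complex
  assumes "c \<noteq> 0" and "c \<bullet> z = 0" and "c \<bullet> (\<i> * z) = 0"
  shows "z = 0"
proof -
  have "cnj c * z = 0"
    using assms(2,3) by (simp add: complex_eq_iff inner_complex_def algebra_simps)
  with assms(1) show ?thesis
    by simp
qed

lemma has_derivative_norm_squared:
  fixes f :: "'a::real_normed_vector \<Rightarrow> 'b::real_inner"
  assumes "(f has_derivative f') (at x within S)"
  shows "((\<lambda>y. (norm (f y))\<^sup>2) has_derivative (\<lambda>v. 2 * (f x \<bullet> f' v))) (at x within S)"
proof -
  have "((\<lambda>y. f y \<bullet> f y) has_derivative (\<lambda>v. f x \<bullet> f' v + f' v \<bullet> f x)) (at x within S)"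
    using has_derivative_inner[OF assms assms] .
  then show ?thesis
    by (simp add: power2_norm_eq_inner inner_commute)
qed

lemma complex_tangent_norm_squared_level_subset_kernel:
  fixes h :: "complex \<times> complex \<Rightarrow> complex"
  assumes h_deriv: "(h has_derivative L) (at p)"
    and L_complex_linear: "\<And>w. L (cmul \<i> w) = \<i> * L w"
    and "h p \<noteq> 0"
    and "v \<in> complex_tangent (\<lambda>z. (cmod (h z))\<^sup>2 - r) p"
  shows "L v = 0"
proof -
  have "((\<lambda>z. (cmod (h z))\<^sup>2 - r) has_derivative (\<lambda>v. 2 * (h p \<bullet> L v))) (at p)"
    using has_derivative_diff[OF has_derivative_norm_squared[OF h_deriv] has_derivative_const]
    by simp
  then have d\<rho>: "frechet_derivative (\<lambda>z. (cmod (h z))\<^sup>2 - r) (at p) = (\<lambda>v. 2 * (h p \<bullet> L v))"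
    by (rule frechet_derivative_at[symmetric])
  from assms(4) obtain w where "h p \<bullet> L v = 0" "h p \<bullet> L w = 0" "v = cmul \<i> w"
    unfolding complex_tangent_def d\<rho> by auto
  with L_complex_linear have "h p \<bullet> L w = 0" "h p \<bullet> (\<i> * L w) = 0"
    by auto
  with \<open>h p \<noteq> 0\<close> have "L w = 0"
    by (rule orthogonal_complex_line_imp_zero)
  with L_complex_linear \<open>v = cmul \<i> w\<close> show ?thesis
    by simp
qed

lemma holomorphic2_constant_along_complex_tangent_curve:
  fixes h :: "complex \<times> complex \<Rightarrow> complex" and \<gamma> :: "real \<Rightarrow> complex \<times> complex"
  assumes "holomorphic2_on h \<Omega>" and "is_interval I" and "\<gamma> ` I \<subseteq> \<Omega>"
    and "\<And>t. t \<in> I \<Longrightarrow> h (\<gamma> t) \<noteq> 0"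
    and "\<And>t. t \<in> I \<Longrightarrow> (\<gamma> has_vector_derivative \<gamma>' t) (at t within I)"
    and "\<And>t. t \<in> I \<Longrightarrow> \<gamma>' t \<in> complex_tangent (\<lambda>z. (cmod (h z))\<^sup>2 - r) (\<gamma> t)"
  shows "\<exists>c. \<forall>t\<in>I. h (\<gamma> t) = c"
proof -
  have "((h \<circ> \<gamma>) has_vector_derivative 0) (at t within I)" if "t \<in> I" for t
  proof -
    obtain a b where h_deriv: "(h has_derivative (\<lambda>w. a * fst w + b * snd w)) (at (\<gamma> t))"
      using assms(1,3) \<open>t \<in> I\<close> unfolding holomorphic2_on_def by blast
    have "a * fst (\<gamma>' t) + b * snd (\<gamma>' t) = 0"
      using complex_tangent_norm_squared_level_subset_kernel[OF h_deriv _ assms(4,6)] \<open>t \<in> I\<close>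
      by (simp add: cmul_def algebra_simps)
    moreover have "(h has_derivative (\<lambda>w. a * fst w + b * snd w)) (at (\<gamma> t) within \<gamma> ` I)"
      using h_deriv by (rule has_derivative_at_withinI)
    ultimately show ?thesis
      using vector_derivative_diff_chain_within[OF assms(5)[OF \<open>t \<in> I\<close>]] by fastforce
  qed
  then obtain c where "\<And>t. t \<in> I \<Longrightarrow> (h \<circ> \<gamma>) t = c"
    using has_vector_derivative_zero_constant[OF is_interval_convex[OF assms(2)]] by blast
  then show ?thesis
    by auto
qed

theorem lemma2p3:
  fixes \<Omega> :: "(complex \<times> complex) set"
    and h :: "complex \<times> complex \<Rightarrow> complex"
    and \<rho> :: "complex \<times> complex \<Rightarrow> real"
    and M K :: "(complex \<times> complex) set"
    and U :: "(real \<times> real) set"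
    and \<phi> :: "real \<times> real \<Rightarrow> complex \<times> complex"
  assumes "open \<Omega>" and "connected \<Omega>"
    and "holomorphic2_on h \<Omega>"
    and "\<rho> = (\<lambda>z. (cmod (h z))\<^sup>2 - 1)"
    and "M = {z \<in> \<Omega>. \<rho> z = 0}"
    and "\<forall>z\<in>M. \<exists>D. (\<rho> has_derivative D) (at z) \<and> D \<noteq> (\<lambda>_. 0)"
    and "totally_real_disc_chart U \<phi> K"
    and "K \<subseteq> M"
  shows "\<forall>(I :: real set) \<gamma> \<gamma>'. is_interval I \<and> \<gamma> ` I \<subseteq> K \<and>
           (\<forall>t\<in>I. (\<gamma> has_vector_derivative \<gamma>' t) (at t within I) \<and>
                   \<gamma>' t \<in> tangent_K U \<phi> (\<gamma> t) \<inter> complex_tangent \<rho> (\<gamma> t))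
         \<longrightarrow> (\<exists>c. \<forall>t\<in>I. h (\<gamma> t) = c)"
proof (intro allI impI)
  fix I :: "real set" and \<gamma> \<gamma>'
  assume leaf: "is_interval I \<and> \<gamma> ` I \<subseteq> K \<and>
           (\<forall>t\<in>I. (\<gamma> has_vector_derivative \<gamma>' t) (at t within I) \<and>
                   \<gamma>' t \<in> tangent_K U \<phi> (\<gamma> t) \<inter> complex_tangent \<rho> (\<gamma> t))"
  have on_M: "\<gamma> ` I \<subseteq> M"
    using leaf \<open>K \<subseteq> M\<close> by blast
  show "\<exists>c. \<forall>t\<in>I. h (\<gamma> t) = c"
  proof (rule holomorphic2_constant_along_complex_tangent_curve[OF assms(3)])
    show "is_interval I"
      using leaf by blast
    show "\<gamma> ` I \<subseteq> \<Omega>"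
      using on_M assms(5) by blast
    show "h (\<gamma> t) \<noteq> 0" if "t \<in> I" for t
      using on_M \<open>t \<in> I\<close> unfolding assms(4,5) by auto
    show "(\<gamma> has_vector_derivative \<gamma>' t) (at t within I)" if "t \<in> I" for t
      using leaf \<open>t \<in> I\<close> by blast
    show "\<gamma>' t \<in> complex_tangent (\<lambda>z. (cmod (h z))\<^sup>2 - 1) (\<gamma> t)" if "t \<in> I" for t
      using leaf \<open>t \<in> I\<close> unfolding assms(4) by blast
  qed
qed

end
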